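(* Let $\beta\in(0,1]$, let $\mathfrak{g}(x)=x^\beta$ and $\mathfrak{h}(x)=\frac{1}{\log(1/x)}$ (for small $x>0$, with $\mathfrak h(0)=0$). If $E\subseteq\mathbb{R}^2$ is an $F_{\mathfrak{h}\mathfrak{g}}$-set, then $\dim(E)\ge\frac{\beta}{2}$.
   Context: $\dim$ denotes Hausdorff dimension. For a non-decreasing $h$ with $h(0)=0$, $F\subseteq\mathbb{R}^n$, $\delta>0$: $\mathcal{H}^h_\delta(F)=\inf\{\sum_i h(\mathrm{diam}(F_i)): F\subseteq\bigcup_i F_i,\ \mathrm{diam}(F_i)<\delta\}$ and $\mathcal{H}^h(F)=\sup_{\delta>0}\mathcal{H}^h_\delta(F)$. $\mathbb{S}$ is the unit circle. A set $E\subseteq\mathbb{R}^2$ is an $F_{\mathfrak{h}\mathfrak{g}}$-set if there is $L\subseteq\mathbb{S}$ with $\mathcal{H}^{\mathfrak{g}}(L)>0$ and a number $\delta_E>0$ such that for each $e\in L$ there is a line segment $\ell_e$ in direction $e$ with $\mathcal{H}^{\mathfrak{h}}_\delta(\ell_e\cap E)>1$ for all $0<\delta<\delta_E$. *)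

theory Defs
  imports "HOL-Analysis.Analysis"
begin

definition hcontent :: "(real \<Rightarrow> real) \<Rightarrow> real \<Rightarrow> 'a::metric_space set \<Rightarrow> ennreal" where
  "hcontent h \<delta> F =
     (INF C \<in> {C :: nat \<Rightarrow> 'a set. F \<subseteq> (\<Union>i. C i) \<and> (\<forall>i. bounded (C i) \<and> diameter (C i) < \<delta>)}.
        (\<Sum>i. ennreal (h (diameter (C i)))))"

definition hmeasure :: "(real \<Rightarrow> real) \<Rightarrow> 'a::metric_space set \<Rightarrow> ennreal" where
  "hmeasure h F = (SUP \<delta> \<in> {0<..}. hcontent h \<delta> F)"

definition hdim :: "'a::metric_space set \<Rightarrow> ereal" where
  "hdim F = Inf {ereal s | s. 0 \<le> s \<and> hmeasure (\<lambda>x. x powr s) F = 0}"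

definition gauge_g :: "real \<Rightarrow> real \<Rightarrow> real" where
  "gauge_g \<beta> x = x powr \<beta>"

text \<open>The gauge h(x) = 1/log(1/x) near 0, h(0) = 0, extended monotonically (constant 1)
  for x \<ge> 1/e; only values near 0 matter.\<close>
definition gauge_h :: "real \<Rightarrow> real" where
  "gauge_h x = (if x \<le> 0 then 0 else if x < exp (-1) then 1 / ln (1 / x) else 1)"

definition F_set :: "(real \<Rightarrow> real) \<Rightarrow> (real \<Rightarrow> real) \<Rightarrow> (real^2) set \<Rightarrow> bool" where
  "F_set h g E \<longleftrightarrow>
     (\<exists>L \<subseteq> sphere (0::real^2) 1. hmeasure g L > 0 \<and>
        (\<exists>\<delta>E > 0. \<forall>e \<in> L. \<exists>a t. t > 0 \<and>
           (\<forall>\<delta>. 0 < \<delta> \<and> \<delta> < \<delta>E \<longrightarrow> hcontent h \<delta> (closed_segment a (a + t *\<^sub>R e) \<inter> E) > 1)))"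

end

theory Submission
  imports Defs
begin

text \<open>
  Suppose \<open>H^s(E) = 0\<close> for some \<open>0 \<le> s < \<beta>/2\<close>; we show that the
  direction set \<open>L\<close> then has \<open>H^g(L) = 0\<close> for \<open>g(x) = x^\<beta>\<close>, contradicting the definition of an
  \<open>F_{hg}\<close>-set.  Fix exponents \<open>\<mu> > 1\<close>, \<open>0 < c < 1\<close> with \<open>s(1+\<mu>) \<le> (1-c)\<beta>\<close> and cover \<open>E\<close> by
  pieces \<open>C_i\<close> of diameters \<open>d_i < e^{-X}\<close> with \<open>\<Sum> d_i^s < \<epsilon>\<close>.

  Key lemma (far_pair_exists): if a bounded set \<open>F\<close> has \<open>h\<close>-content \<open>> 1\<close>, two pieces of
  comparable size (\<open>d_i^\<mu> \<le> d_j \<le> d_i\<close>) meet \<open>F\<close> in points at distance \<open>\<ge> d_i^c\<close>.  Otherwise,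
  sorting the pieces into scale classes \<open>ln(1/d_i) \<in> [\<mu>^m X, \<mu>^{m+1} X)\<close>, the trace of each class
  on \<open>F\<close> has diameter \<open>\<le> exp(-c\<mu>^m X)\<close>, and the \<open>h\<close>-values of these traces form a geometric
  series of sum \<open>\<le> 1\<close>.

  Applied to \<open>F = \<ell>_e \<inter> E\<close>, this puts every \<open>e \<in> L\<close> into a set of unit vectors pointing from
  \<open>C_i\<close> to \<open>C_j\<close> (far_directions), whose diameter is \<open>\<le> 4 d_i^{1-c}\<close>, so its \<open>g\<close>-value is at
  most \<open>4^\<beta> d_i^s d_j^s\<close>.  Summing over all pairs gives \<open>H^g_\<delta>(L) \<le> 4^\<beta> (\<Sum> d_i^s)^2 \<le> 4^\<beta> \<epsilon>\<close>.
\<close>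

subsection \<open>Hausdorff contents of covered sets\<close>

text \<open>The metric-space form of the library's \<open>diameter_le\<close>.\<close>
lemma diameter_le_dist:
  fixes S :: "'a::metric_space set"
  assumes "S \<noteq> {} \<or> 0 \<le> \<delta>" and "\<And>x y. x \<in> S \<Longrightarrow> y \<in> S \<Longrightarrow> dist x y \<le> \<delta>"
  shows "diameter S \<le> \<delta>"
  using assms by (auto simp: diameter_def intro: cSUP_least)

lemma hcontent_le_cover:
  fixes C :: "nat \<Rightarrow> 'a::metric_space set"
  assumes "F \<subseteq> (\<Union>i. C i)" "\<And>i. bounded (C i)" "\<And>i. diameter (C i) < \<delta>"
  shows "hcontent h \<delta> F \<le> (\<Sum>i. ennreal (h (diameter (C i))))"
  unfolding hcontent_def using assms by (intro INF_lower) auto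

lemma hcontent_le_pair_cover:
  fixes D :: "nat \<Rightarrow> nat \<Rightarrow> 'a::metric_space set"
  assumes cover: "F \<subseteq> (\<Union>i j. D i j)"
    and "\<And>i j. bounded (D i j)" "\<And>i j. diameter (D i j) < \<delta>"
  shows "hcontent h \<delta> F \<le> (\<Sum>i. \<Sum>j. ennreal (h (diameter (D i j))))"
proof -
  define C where "C n = case_prod D (prod_decode n)" for n
  have "F \<subseteq> (\<Union>n. C n)"
  proof
    fix x assume "x \<in> F"
    then obtain i j where "x \<in> D i j" using cover by blast
    hence "x \<in> C (prod_encode (i, j))" unfolding C_def by simp
    thus "x \<in> (\<Union>n. C n)" by blast
  qed
  hence "hcontent h \<delta> F \<le> (\<Sum>n. ennreal (h (diameter (C n))))"
    using assms(2,3) by (intro hcontent_le_cover) (auto simp: C_def split: prod.split)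
  also have "\<dots> = (\<Sum>i. \<Sum>j. ennreal (h (diameter (D i j))))"
    using suminf_ennreal_2dimen[of "\<lambda>i. \<Sum>j. ennreal (h (diameter (D i j)))"
        "\<lambda>(i, j). ennreal (h (diameter (D i j)))"]
    by (simp add: C_def case_prod_beta)
  finally show ?thesis .
qed

lemma hcontent_geometric_cover:
  fixes K :: "nat \<Rightarrow> 'a::metric_space set"
  assumes "F \<subseteq> (\<Union>n. K n)" "\<And>n. bounded (K n)" "\<And>n. diameter (K n) < \<delta>"
    and hK: "\<And>n. h (diameter (K n)) \<le> B * r ^ n" and "0 \<le> B" "0 \<le> r" "r < 1"
  shows "hcontent h \<delta> F \<le> ennreal (B / (1 - r))"
proof -
  have "hcontent h \<delta> F \<le> (\<Sum>n. ennreal (h (diameter (K n))))"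
    by (rule hcontent_le_cover[OF assms(1-3)])
  also have "\<dots> \<le> (\<Sum>n. ennreal (B * r ^ n))"
    by (intro suminf_le summableI ennreal_leI hK)
  also have "\<dots> = ennreal (\<Sum>n. B * r ^ n)"
    using assms(5-7) by (intro suminf_ennreal2) (auto intro!: summable_mult summable_geometric)
  also have "(\<Sum>n. B * r ^ n) = B / (1 - r)"
    using assms(6,7) by (simp add: suminf_mult suminf_geometric summable_geometric)
  finally show ?thesis .
qed

lemma null_set_small_cover:
  fixes E :: "'a::metric_space set"
  assumes "hmeasure h E = 0" "0 < \<delta>" "0 < \<epsilon>"
  obtains C where "E \<subseteq> (\<Union>i. C i)" "\<And>i. bounded (C i)" "\<And>i. diameter (C i) < \<delta>"
    "(\<Sum>i. ennreal (h (diameter (C i)))) < ennreal \<epsilon>"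
proof -
  have "hcontent h \<delta> E \<le> hmeasure h E"
    unfolding hmeasure_def using assms(2) by (intro SUP_upper) simp
  hence "hcontent h \<delta> E < ennreal \<epsilon>" using assms(1,3) by simp
  thus ?thesis using that unfolding hcontent_def INF_less_iff by blast
qed

subsection \<open>The gauge \<open>h(x) = 1/log(1/x)\<close> and logarithmic scale classes\<close>

lemma gauge_h_bound:
  assumes "0 \<le> x" "x \<le> exp (- y)" "1 < y"
  shows "gauge_h x \<le> 1 / y"
proof (cases "x = 0")
  case True thus ?thesis using assms by (simp add: gauge_h_def)
next
  case False
  hence x0: "0 < x" using assms by simp
  have "exp (- y) < exp (- 1)" using assms by simp
  hence x_small: "x < exp (- 1)" using assms by linarith
  have "ln x \<le> - y" using assms x0 by (metis ln_exp ln_le_cancel_iff exp_gt_zero)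
  hence "y \<le> ln (1 / x)" using x0 by (simp add: ln_div)
  hence "1 / ln (1 / x) \<le> 1 / y" using assms by (intro divide_left_mono) auto
  thus ?thesis using x0 x_small unfolding gauge_h_def by auto
qed

lemma power_class_exists:
  fixes y \<mu> :: real
  assumes "1 \<le> y" "1 < \<mu>"
  obtains m :: nat where "\<mu> ^ m \<le> y" "y < \<mu> ^ (m + 1)"
proof -
  obtain n where "y < \<mu> ^ n" using real_arch_pow assms by blast
  moreover have "\<mu> ^ n \<le> \<mu> ^ (n + 1)" using assms(2) by (intro power_increasing) auto
  ultimately have ex: "y < \<mu> ^ (n + 1)" by linarith
  define m where "m = (LEAST k. y < \<mu> ^ (k + 1))"
  have upper: "y < \<mu> ^ (m + 1)" unfolding m_def by (rule LeastI[of _ n]) (rule ex)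
  have "\<mu> ^ m \<le> y"
  proof (cases m)
    case 0 thus ?thesis using assms by simp
  next
    case (Suc k)
    have "\<not> y < \<mu> ^ (k + 1)" using not_less_Least[of k "\<lambda>k. y < \<mu> ^ (k + 1)"] Suc m_def by simp
    thus ?thesis using Suc by simp
  qed
  thus ?thesis using upper that by blast
qed

lemma same_class_comparable:
  fixes \<mu> Y a b :: real
  assumes "1 < \<mu>" "0 < a" "0 < b" "Y \<le> - ln a" "- ln b < \<mu> * Y"
  shows "a powr \<mu> < b"
proof -
  have "- ln b < \<mu> * Y" by (fact assms(5))
  also have "\<dots> \<le> \<mu> * (- ln a)" using assms(1,4) by (intro mult_left_mono) auto
  finally have "exp (\<mu> * ln a) < exp (ln b)" by simp
  thus ?thesis using assms(2,3) by (simp add: powr_def)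
qed

lemma powr_le_exp_of_log_bound:
  fixes c Y a :: real
  assumes "0 \<le> c" "0 < a" "Y \<le> - ln a"
  shows "a powr c \<le> exp (- (c * Y))"
proof -
  have "c * ln a \<le> c * (- Y)" using assms by (intro mult_left_mono) auto
  thus ?thesis using assms(2) by (simp add: powr_def)
qed

definition scale_class :: "real \<Rightarrow> real \<Rightarrow> nat \<Rightarrow> real \<Rightarrow> bool" where
  "scale_class \<mu> X m d \<longleftrightarrow> 0 < d \<and> \<mu> ^ m * X \<le> - ln d \<and> - ln d < \<mu> * (\<mu> ^ m * X)"

lemma scale_class_exists:
  fixes \<mu> X d :: real
  assumes "1 < \<mu>" "0 < X" "0 < d" "d < exp (- X)"
  obtains m where "scale_class \<mu> X m d"
proof -
  have "ln d < ln (exp (- X))" using assms(3,4) by (subst ln_less_cancel_iff) auto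
  hence "ln d < - X" by simp
  hence "1 \<le> - ln d / X" using assms(2) by (simp add: field_simps)
  then obtain m where "\<mu> ^ m \<le> - ln d / X" "- ln d / X < \<mu> ^ (m + 1)"
    using power_class_exists assms(1) by blast
  thus ?thesis using that assms(2,3) unfolding scale_class_def by (simp add: field_simps)
qed

text \<open>
  The \<open>h\<close>-value of a set of diameter \<open>\<le> e^{-c\<mu>^m X}\<close> decays geometrically in \<open>m\<close>, with ratio
  \<open>1/\<mu> = (1/\<surd>\<mu>)^2\<close>.
\<close>
lemma gauge_h_scale_bound:
  fixes \<mu> c X D :: real
  assumes mu: "1 < \<mu>" and c: "0 < c" and X: "0 < X" and cX: "1 \<le> c * X * (1 - 1 / sqrt \<mu>)"
    and "0 \<le> D" and D: "D \<le> exp (- (c * (\<mu> ^ m * X)))"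
  shows "gauge_h D \<le> 1 / (c * X) * (1 / sqrt \<mu>) ^ (2 * m)"
proof -
  have cX_pos: "0 < c * X" using c X by simp
  have "0 < 1 / sqrt \<mu>" "1 / sqrt \<mu> < 1" using mu by auto
  hence "c * X * (1 - 1 / sqrt \<mu>) < c * X"
    using mult_strict_left_mono[of "1 - 1 / sqrt \<mu>" 1 "c * X"] cX_pos by simp
  moreover have "c * X * 1 \<le> c * X * \<mu> ^ m" using mu cX_pos by (intro mult_left_mono) simp_all
  moreover have "c * (\<mu> ^ m * X) = c * X * \<mu> ^ m" by simp
  ultimately have "1 < c * (\<mu> ^ m * X)" using cX by linarith
  hence "gauge_h D \<le> 1 / (c * (\<mu> ^ m * X))" using assms(5) D by (intro gauge_h_bound)
  also have "\<dots> = 1 / (c * X) * (1 / \<mu>) ^ m" by (simp add: power_one_over)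
  also have "(1 / \<mu>) ^ m = (1 / sqrt \<mu>) ^ (2 * m)"
    using mu by (simp add: power_mult power_divide)
  finally show ?thesis .
qed

lemma class_trace_diameter:
  fixes C :: "nat \<Rightarrow> 'a::metric_space set" and \<mu> c X :: real
  assumes no_far: "\<And>i j x y. 0 < diameter (C j) \<Longrightarrow> diameter (C j) \<le> diameter (C i) \<Longrightarrow>
      diameter (C i) powr \<mu> \<le> diameter (C j) \<Longrightarrow> x \<in> C i \<inter> F \<Longrightarrow> y \<in> C j \<inter> F \<Longrightarrow>
      dist x y < diameter (C i) powr c"
    and mu: "1 < \<mu>" and c: "0 \<le> c"
  shows "diameter (\<Union>i\<in>{i. scale_class \<mu> X m (diameter (C i))}. C i \<inter> F) \<le> exp (- (c * (\<mu> ^ m * X)))"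
proof -
  have close: "dist x y \<le> exp (- (c * (\<mu> ^ m * X)))"
    if cls: "scale_class \<mu> X m (diameter (C i))" "scale_class \<mu> X m (diameter (C j))"
      and xy: "x \<in> C i \<inter> F" "y \<in> C j \<inter> F" and ji: "diameter (C j) \<le> diameter (C i)" for i j x y
  proof -
    have "diameter (C i) powr \<mu> \<le> diameter (C j)"
      using same_class_comparable[OF mu] cls unfolding scale_class_def by (meson less_imp_le)
    hence "dist x y < diameter (C i) powr c" using no_far xy ji cls unfolding scale_class_def by blast
    also have "diameter (C i) powr c \<le> exp (- (c * (\<mu> ^ m * X)))"
      using c cls by (intro powr_le_exp_of_log_bound) (auto simp: scale_class_def)
    finally show ?thesis by simp
  qed
  show ?thesis
  proof (rule diameter_le_dist)
    fix x y assume "x \<in> (\<Union>i\<in>{i. scale_class \<mu> X m (diameter (C i))}. C i \<inter> F)"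
      "y \<in> (\<Union>i\<in>{i. scale_class \<mu> X m (diameter (C i))}. C i \<inter> F)"
    then obtain i j where i: "scale_class \<mu> X m (diameter (C i))" "x \<in> C i \<inter> F"
      and j: "scale_class \<mu> X m (diameter (C j))" "y \<in> C j \<inter> F" by auto
    show "dist x y \<le> exp (- (c * (\<mu> ^ m * X)))"
    proof (cases "diameter (C j) \<le> diameter (C i)")
      case True thus ?thesis using close[OF i(1) j(1) i(2) j(2)] by simp
    next
      case False thus ?thesis using close[OF j(1) i(1) j(2) i(2)] by (simp add: dist_commute)
    qed
  qed simp
qed

lemma hcontent_interleaved_cover:
  fixes T Z :: "nat \<Rightarrow> 'a::metric_space set"
  assumes cover: "F \<subseteq> (\<Union>m. T m) \<union> (\<Union>i. Z i)"
    and bT: "\<And>m. bounded (T m)" and bZ: "\<And>i. bounded (Z i)"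
    and dT: "\<And>m. diameter (T m) < \<delta>" and hT: "\<And>m. h (diameter (T m)) \<le> B * r ^ (2 * m)"
    and dZ: "\<And>i. diameter (Z i) = 0" and h0: "h 0 = 0"
    and \<delta>: "0 < \<delta>" and B: "0 \<le> B" and r: "0 \<le> r" "r < 1"
  shows "hcontent h \<delta> F \<le> ennreal (B / (1 - r))"
proof (rule hcontent_geometric_cover[OF _ _ _ _ B r])
  define K where "K n = (if even n then T (n div 2) else Z (n div 2))" for n
  show "F \<subseteq> (\<Union>n. K n)"
  proof
    fix x assume "x \<in> F"
    then consider m where "x \<in> T m" | i where "x \<in> Z i" using cover by blast
    thus "x \<in> (\<Union>n. K n)"
    proof cases
      case (1 m)
      hence "x \<in> K (2 * m)" unfolding K_def by simp
      thus ?thesis by blast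
    next
      case (2 i)
      hence "x \<in> K (2 * i + 1)" unfolding K_def by simp
      thus ?thesis by blast
    qed
  qed
  show "bounded (K n)" "diameter (K n) < \<delta>" for n
    using bT bZ dT dZ \<delta> unfolding K_def by simp_all
  show "h (diameter (K n)) \<le> B * r ^ n" for n
  proof (cases "even n")
    case True
    then obtain m where "n = 2 * m" by blast
    thus ?thesis using hT[of m] unfolding K_def by simp
  next
    case False
    thus ?thesis using dZ h0 B r unfolding K_def by simp
  qed
qed

subsection \<open>The key lemma: sets of large \<open>h\<close>-content contain far pairs at comparable scales\<close>

text \<open>
  Otherwise the traces of the scale classes on
  \<open>F\<close>, together with the traces of the pieces of diameter zero, would cover \<open>F\<close> with total
  \<open>h\<close>-value \<open>\<le> (cX)^{-1} \<Sum>\<^sub>n \<mu>^{-n/2} \<le> 1\<close>.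
\<close>
lemma far_pair_exists:
  fixes C :: "nat \<Rightarrow> 'a::metric_space set" and F :: "'a set" and \<mu> c X \<delta> :: real
  assumes bC: "\<And>i. bounded (C i)" and cov: "F \<subseteq> (\<Union>i. C i)"
    and dC: "\<And>i. diameter (C i) < exp (- X)"
    and mu: "1 < \<mu>" and c: "0 < c" and X: "0 < X" and cX: "1 \<le> c * X * (1 - 1 / sqrt \<mu>)"
    and dl: "exp (- (c * X)) < \<delta>" and bF: "bounded F"
    and big: "1 < hcontent gauge_h \<delta> F"
  shows "\<exists>i j x y. 0 < diameter (C j) \<and> diameter (C j) \<le> diameter (C i) \<and>
     diameter (C i) powr \<mu> \<le> diameter (C j) \<and> x \<in> C i \<inter> F \<and> y \<in> C j \<inter> F \<and>
     diameter (C i) powr c \<le> dist x y"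
proof (rule ccontr)
  assume "\<not> ?thesis"
  hence no_far: "dist x y < diameter (C i) powr c"
    if "0 < diameter (C j)" "diameter (C j) \<le> diameter (C i)" "diameter (C i) powr \<mu> \<le> diameter (C j)"
      "x \<in> C i \<inter> F" "y \<in> C j \<inter> F" for i j x y
    using that by force
  define T where "T m = (\<Union>i\<in>{i. scale_class \<mu> X m (diameter (C i))}. C i \<inter> F)" for m
  define Z where "Z i = (if diameter (C i) = 0 then C i \<inter> F else {})" for i
  define r where "r = 1 / sqrt \<mu>"
  define B where "B = 1 / (c * X)"
  have r: "0 < r" "r < 1" using mu unfolding r_def by auto
  have T_diam: "diameter (T m) \<le> exp (- (c * (\<mu> ^ m * X)))" for m
    unfolding T_def using no_far mu c by (intro class_trace_diameter) auto
  have bT: "bounded (T m)" for m using bF unfolding T_def by (auto intro: bounded_subset)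
  have "c * X * 1 \<le> c * X * \<mu> ^ m" for m using mu c X by (intro mult_left_mono) simp_all
  hence "exp (- (c * (\<mu> ^ m * X))) \<le> exp (- (c * X))" for m by (simp add: ac_simps)
  hence T_small: "diameter (T m) < \<delta>" for m using T_diam[of m] dl by (meson order_le_less_trans)
  have T_gauge: "gauge_h (diameter (T m)) \<le> B * r ^ (2 * m)" for m
    unfolding B_def r_def using mu c X cX diameter_ge_0[OF bT] T_diam by (rule gauge_h_scale_bound)
  have Z_diam: "diameter (Z i) = 0" for i
  proof (cases "diameter (C i) = 0")
    case True
    have "diameter (C i \<inter> F) \<le> diameter (C i)" by (rule diameter_subset) (auto simp: bC)
    moreover have "0 \<le> diameter (C i \<inter> F)" by (rule diameter_ge_0) (auto intro: bounded_subset bF)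
    ultimately show ?thesis using True unfolding Z_def by simp
  qed (simp add: Z_def)
  have bZ: "bounded (Z i)" for i using bF unfolding Z_def by (auto intro: bounded_subset)
  have cover: "F \<subseteq> (\<Union>m. T m) \<union> (\<Union>i. Z i)"
  proof
    fix x assume xF: "x \<in> F"
    then obtain i where xi: "x \<in> C i" using cov by auto
    show "x \<in> (\<Union>m. T m) \<union> (\<Union>i. Z i)"
    proof (cases "diameter (C i) = 0")
      case True
      hence "x \<in> Z i" using xi xF unfolding Z_def by simp
      thus ?thesis by blast
    next
      case False
      hence pos: "0 < diameter (C i)" using diameter_ge_0[OF bC] by (simp add: order_less_le)
      obtain m where "scale_class \<mu> X m (diameter (C i))"
        using scale_class_exists[OF mu X pos dC] by blast
      hence "x \<in> T m" using xi xF unfolding T_def by blast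
      thus ?thesis by blast
    qed
  qed
  have "0 < \<delta>" using dl by (meson exp_gt_zero less_trans)
  moreover have "0 \<le> B" using c X unfolding B_def by simp
  ultimately have "hcontent gauge_h \<delta> F \<le> ennreal (B / (1 - r))"
    using r by (intro hcontent_interleaved_cover[OF cover bT bZ T_small T_gauge Z_diam])
      (simp_all add: gauge_h_def)
  moreover have "B / (1 - r) \<le> 1"
  proof -
    have "1 \<le> c * X * (1 - r)" using cX unfolding r_def .
    thus ?thesis using r c X unfolding B_def by (simp add: field_simps)
  qed
  ultimately have "hcontent gauge_h \<delta> F \<le> 1" by (metis ennreal_le_1 order_trans)
  thus False using big by simp
qed

subsection \<open>Directions between two far-apart pieces\<close>

lemma sgn_diff_bound:
  fixes u v :: "'a::real_normed_vector"
  assumes "u \<noteq> 0"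
  shows "norm (sgn u - sgn v) \<le> 2 * norm (u - v) / norm u"
proof (cases "v = 0")
  case True thus ?thesis using assms by (simp add: norm_sgn)
next
  case False
  have nu: "0 < norm u" using assms by simp
  have nv: "0 < norm v" using False by simp
  have "sgn u - sgn v = (1 / norm u) *\<^sub>R (u - v) + (1 / norm u - 1 / norm v) *\<^sub>R v"
    by (simp add: sgn_div_norm algebra_simps divide_inverse)
  hence "norm (sgn u - sgn v) \<le> norm ((1 / norm u) *\<^sub>R (u - v)) + norm ((1 / norm u - 1 / norm v) *\<^sub>R v)"
    by (metis norm_triangle_ineq)
  also have "norm ((1 / norm u) *\<^sub>R (u - v)) = norm (u - v) / norm u" by simp
  also have "norm ((1 / norm u - 1 / norm v) *\<^sub>R v) = \<bar>norm v - norm u\<bar> / norm u"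
    using nu nv by (simp add: field_simps abs_mult)
  also have "\<bar>norm v - norm u\<bar> \<le> norm (u - v)"
    by (metis abs_minus_commute norm_triangle_ineq3)
  hence "\<bar>norm v - norm u\<bar> / norm u \<le> norm (u - v) / norm u" using nu by (simp add: divide_right_mono)
  finally show ?thesis by simp
qed

lemma direction_set_diameter:
  fixes P Q :: "'a::real_normed_vector set" and \<rho> D :: real
  assumes bP: "bounded P" and bQ: "bounded Q" and rho: "0 < \<rho>"
    and dP: "diameter P \<le> D" and dQ: "diameter Q \<le> D"
  shows "diameter {sgn (y - x) | x y. x \<in> P \<and> y \<in> Q \<and> \<rho> \<le> dist x y} \<le> 4 * D / \<rho>"
proof (rule diameter_le)
  have "0 \<le> D" using dP diameter_ge_0[OF bP] by linarith
  thus "{sgn (y - x) | x y. x \<in> P \<and> y \<in> Q \<and> \<rho> \<le> dist x y} \<noteq> {} \<or> 0 \<le> 4 * D / \<rho>"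
    using rho by simp
  fix z1 z2 assume "z1 \<in> {sgn (y - x) | x y. x \<in> P \<and> y \<in> Q \<and> \<rho> \<le> dist x y}"
    "z2 \<in> {sgn (y - x) | x y. x \<in> P \<and> y \<in> Q \<and> \<rho> \<le> dist x y}"
  then obtain x y x' y' where z1: "z1 = sgn (y - x)" "x \<in> P" "y \<in> Q" "\<rho> \<le> dist x y"
    and z2: "z2 = sgn (y' - x')" "x' \<in> P" "y' \<in> Q" by blast
  have far: "\<rho> \<le> norm (y - x)" using z1 by (simp add: dist_norm norm_minus_commute)
  hence "y - x \<noteq> 0" using rho by auto
  hence "norm (z1 - z2) \<le> 2 * norm ((y - x) - (y' - x')) / norm (y - x)"
    unfolding z1(1) z2(1) by (rule sgn_diff_bound)
  also have "norm ((y - x) - (y' - x')) \<le> 2 * D"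
  proof -
    have "(y - x) - (y' - x') = (y - y') - (x - x')" by (simp add: algebra_simps)
    hence "norm ((y - x) - (y' - x')) \<le> norm (y - y') + norm (x - x')"
      by (metis norm_triangle_ineq4)
    also have "norm (y - y') \<le> D" using diameter_bounded_bound[OF bQ z1(3) z2(3)] dQ by (simp add: dist_norm)
    also have "norm (x - x') \<le> D" using diameter_bounded_bound[OF bP z1(2) z2(2)] dP by (simp add: dist_norm)
    finally show ?thesis by simp
  qed
  hence "2 * norm ((y - x) - (y' - x')) / norm (y - x) \<le> 2 * (2 * D) / \<rho>"
    using far rho \<open>0 \<le> D\<close> by (intro frac_le) auto
  finally show "norm (z1 - z2) \<le> 4 * D / \<rho>" by simp
qed

definition far_directions :: "(nat \<Rightarrow> 'a::real_normed_vector set) \<Rightarrow> real \<Rightarrow> real \<Rightarrow> nat \<Rightarrow> nat \<Rightarrow> 'a set"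
  where "far_directions C \<mu> c i j =
    (let M = max (diameter (C i)) (diameter (C j)); m = min (diameter (C i)) (diameter (C j))
     in if 0 < m \<and> M powr \<mu> \<le> m then {sgn (y - x) | x y. x \<in> C i \<and> y \<in> C j \<and> M powr c \<le> dist x y}
        else {})"

lemma far_directionsI:
  fixes C :: "nat \<Rightarrow> 'a::real_normed_vector set"
  assumes "0 < diameter (C j)" "diameter (C j) \<le> diameter (C i)"
    "diameter (C i) powr \<mu> \<le> diameter (C j)" "x \<in> C i" "y \<in> C j" "diameter (C i) powr c \<le> dist x y"
  shows "sgn (y - x) \<in> far_directions C \<mu> c i j" "sgn (x - y) \<in> far_directions C \<mu> c j i"
proof -
  have ij: "max (diameter (C i)) (diameter (C j)) = diameter (C i)"
    "min (diameter (C i)) (diameter (C j)) = diameter (C j)" using assms(2) by auto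
  have ji: "max (diameter (C j)) (diameter (C i)) = diameter (C i)"
    "min (diameter (C j)) (diameter (C i)) = diameter (C j)" using assms(2) by auto
  show "sgn (y - x) \<in> far_directions C \<mu> c i j"
    unfolding far_directions_def Let_def ij using assms by auto
  have "\<exists>x' y'. sgn (x - y) = sgn (y' - x') \<and> x' \<in> C j \<and> y' \<in> C i \<and> diameter (C i) powr c \<le> dist x' y'"
    using assms by (intro exI[of _ y] exI[of _ x]) (simp add: dist_commute)
  thus "sgn (x - y) \<in> far_directions C \<mu> c j i"
    unfolding far_directions_def Let_def ji using assms by simp
qed

text \<open>
  The \<open>g\<close>-size of a direction set: with \<open>s(1+\<mu>) \<le> (1-c)\<beta>\<close> and pieces of diameter \<open>< e^{-X} \<le> 1\<close>,
  its diameter is \<open>\<le> 4 M^{1-c}\<close> and its \<open>g\<close>-value is \<open>\<le> 4^\<beta> d_i^s d_j^s\<close>.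
\<close>
lemma far_directions_small:
  fixes C :: "nat \<Rightarrow> 'a::real_normed_vector set"
  assumes bC: "\<And>k. bounded (C k)" and dC: "\<And>k. diameter (C k) < exp (- X)"
    and X: "0 \<le> X" and c: "0 < c" "c < 1" and \<beta>: "0 < \<beta>" and s: "0 \<le> s"
    and expo: "s * (1 + \<mu>) \<le> (1 - c) * \<beta>" and \<delta>: "0 < \<delta>" "4 * exp (- ((1 - c) * X)) < \<delta>"
  shows "bounded (far_directions C \<mu> c i j)" "diameter (far_directions C \<mu> c i j) < \<delta>"
    "gauge_g \<beta> (diameter (far_directions C \<mu> c i j))
       \<le> 4 powr \<beta> * (diameter (C i) powr s * diameter (C j) powr s)"
proof -
  define M where "M = max (diameter (C i)) (diameter (C j))"
  define m where "m = min (diameter (C i)) (diameter (C j))"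
  define A where "A = {sgn (y - x) | x y. x \<in> C i \<and> y \<in> C j \<and> M powr c \<le> dist x y}"
  have prod_eq: "M powr s * m powr s = diameter (C i) powr s * diameter (C j) powr s"
    unfolding M_def m_def by (cases "diameter (C i) \<le> diameter (C j)") (auto simp: max_def min_def)
  have rhs0: "0 \<le> 4 powr \<beta> * (diameter (C i) powr s * diameter (C j) powr s)" by simp
  have FD: "far_directions C \<mu> c i j = (if 0 < m \<and> M powr \<mu> \<le> m then A else {})"
    by (unfold far_directions_def Let_def M_def m_def A_def) (rule refl)
  consider (empty) "far_directions C \<mu> c i j = {}" | (comparable) "0 < m" "M powr \<mu> \<le> m"
    using FD by fastforce
  hence "bounded (far_directions C \<mu> c i j) \<and> diameter (far_directions C \<mu> c i j) < \<delta> \<and>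
    gauge_g \<beta> (diameter (far_directions C \<mu> c i j))
       \<le> 4 powr \<beta> * (diameter (C i) powr s * diameter (C j) powr s)"
  proof cases
    case empty
    thus ?thesis
      using \<delta> \<beta> rhs0 by (auto simp: gauge_g_def)
  next
    case comparable
    hence FD_A: "far_directions C \<mu> c i j = A" using FD by simp
    have M_pos: "0 < M" using comparable unfolding M_def m_def by linarith
    have M_small: "M < exp (- X)" using dC unfolding M_def by (simp add: max_def)
    have "exp (- X) \<le> 1" using X by simp
    hence M1: "M \<le> 1" using M_small by linarith
    have bA: "bounded A"
      by (rule bounded_subset[OF bounded_cball[of 0 1]]) (auto simp: A_def norm_sgn)
    have "diameter A \<le> 4 * M / M powr c"
      unfolding A_def using M_pos bC by (intro direction_set_diameter) (auto simp: M_def)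
    also have "4 * M / M powr c = 4 * M powr (1 - c)" using M_pos by (simp add: powr_diff)
    finally have dA: "diameter A \<le> 4 * M powr (1 - c)" .
    have "M powr (1 - c) < exp (- X) powr (1 - c)"
      using c M_pos M_small by (intro powr_less_mono2) auto
    also have "\<dots> = exp (- ((1 - c) * X))" by (simp add: powr_def)
    finally have "diameter A < \<delta>" using dA \<delta> by linarith
    moreover have "gauge_g \<beta> (diameter A) \<le> 4 powr \<beta> * (M powr s * m powr s)"
    proof -
      have "gauge_g \<beta> (diameter A) \<le> (4 * M powr (1 - c)) powr \<beta>"
        unfolding gauge_g_def using dA diameter_ge_0[OF bA] \<beta> by (intro powr_mono2) auto
      also have "\<dots> = 4 powr \<beta> * M powr ((1 - c) * \<beta>)" by (simp add: powr_mult powr_powr)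
      also have "M powr ((1 - c) * \<beta>) \<le> M powr (s * (1 + \<mu>))"
        using expo M_pos M1 by (intro powr_mono') auto
      also have "\<dots> = M powr s * (M powr \<mu>) powr s"
        by (simp add: powr_powr powr_add[symmetric] algebra_simps)
      also have "(M powr \<mu>) powr s \<le> m powr s" using comparable s by (intro powr_mono2) auto
      finally show ?thesis by (simp add: mult_left_mono)
    qed
    ultimately show ?thesis
      using FD_A bA prod_eq by simp
  qed
  thus "bounded (far_directions C \<mu> c i j)" "diameter (far_directions C \<mu> c i j) < \<delta>"
    "gauge_g \<beta> (diameter (far_directions C \<mu> c i j))
       \<le> 4 powr \<beta> * (diameter (C i) powr s * diameter (C j) powr s)" by simp_all
qed

text \<open>
  Every direction \<open>e\<close> carrying a segment whose trace on \<open>E\<close> has large \<open>h\<close>-content lies in one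
  of the direction sets of a cover of \<open>E\<close>: the far pair found on the segment points along \<open>\<pm>e\<close>.
\<close>
lemma direction_in_far_directions:
  fixes C :: "nat \<Rightarrow> 'a::real_normed_vector set" and E :: "'a set"
  assumes e: "norm e = 1" and big: "1 < hcontent gauge_h \<delta> (closed_segment a (a + t *\<^sub>R e) \<inter> E)"
    and cov: "E \<subseteq> (\<Union>i. C i)" and bC: "\<And>i. bounded (C i)" and dC: "\<And>i. diameter (C i) < exp (- X)"
    and mu: "1 < \<mu>" and c: "0 < c" and X: "0 < X" and cX: "1 \<le> c * X * (1 - 1 / sqrt \<mu>)"
    and dl: "exp (- (c * X)) < \<delta>"
  shows "\<exists>i j. e \<in> far_directions C \<mu> c i j"
proof -
  define F where "F = closed_segment a (a + t *\<^sub>R e) \<inter> E"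
  have bF: "bounded F" unfolding F_def by (simp add: bounded_Int bounded_closed_segment)
  have covF: "F \<subseteq> (\<Union>i. C i)" using cov unfolding F_def by auto
  obtain i j x y where ij: "0 < diameter (C j)" "diameter (C j) \<le> diameter (C i)"
      "diameter (C i) powr \<mu> \<le> diameter (C j)" "x \<in> C i \<inter> F" "y \<in> C j \<inter> F"
      "diameter (C i) powr c \<le> dist x y"
    using far_pair_exists[OF bC covF dC mu c X cX dl bF big[folded F_def]] by blast
  have dirs: "sgn (y - x) \<in> far_directions C \<mu> c i j" "sgn (x - y) \<in> far_directions C \<mu> c j i"
    using far_directionsI[OF ij(1-3) _ _ ij(6)] ij(4,5) by auto
  obtain u v where "x = (1 - u) *\<^sub>R a + u *\<^sub>R (a + t *\<^sub>R e)" "y = (1 - v) *\<^sub>R a + v *\<^sub>R (a + t *\<^sub>R e)"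
    using ij(4,5) unfolding F_def by (auto simp: in_segment)
  hence yx: "y - x = ((v - u) * t) *\<^sub>R e" by (simp add: algebra_simps)
  define l where "l = (v - u) * t"
  have "0 < diameter (C i)" using ij(1,2) by linarith
  hence "0 < diameter (C i) powr c" by simp
  hence "0 < dist x y" using ij(6) by linarith
  hence l0: "l \<noteq> 0" using yx unfolding l_def by auto
  have sgn_e: "sgn e = e" using e by (simp add: sgn_div_norm)
  show ?thesis
  proof (cases "0 < l")
    case True
    hence "sgn (y - x) = e" using yx sgn_e unfolding l_def by (simp add: sgn_scaleR)
    thus ?thesis using dirs(1) by metis
  next
    case False
    hence "0 < - l" using l0 by simp
    moreover have "x - y = (- l) *\<^sub>R e" using yx unfolding l_def by (simp add: algebra_simps)
    ultimately have "sgn (x - y) = e" using sgn_e by (simp only: sgn_scaleR) simp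
    thus ?thesis using dirs(2) by metis
  qed
qed

subsection \<open>The direction set is \<open>g\<close>-null\<close>

lemma exponent_choice:
  fixes s \<beta> :: real
  assumes s: "0 \<le> s" "s < \<beta> / 2"
  obtains \<mu> c where "1 < \<mu>" "0 < c" "c < 1" "s * (1 + \<mu>) \<le> (1 - c) * \<beta>"
proof -
  define \<tau> where "\<tau> = (\<beta> - 2 * s) / (2 * (s + \<beta>))"
  have sb: "0 < s + \<beta>" using s by simp
  have \<tau>0: "0 < \<tau>" unfolding \<tau>_def using s by (intro divide_pos_pos) auto
  have \<tau>1: "\<tau> < 1" unfolding \<tau>_def using sb s by (subst divide_less_eq_1_pos) auto
  have eq: "\<tau> * (s + \<beta>) = (\<beta> - 2 * s) / 2" unfolding \<tau>_def using sb by (simp add: field_simps)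
  have "(1 - \<tau>) * \<beta> - s * (1 + (1 + \<tau>)) = (\<beta> - 2 * s) - \<tau> * (s + \<beta>)"
    by (simp add: algebra_simps)
  also have "\<dots> = (\<beta> - 2 * s) / 2" using eq by simp
  finally have "s * (1 + (1 + \<tau>)) \<le> (1 - \<tau>) * \<beta>" using s by simp
  thus ?thesis using that[of "1 + \<tau>" \<tau>] \<tau>0 \<tau>1 by simp
qed

lemma choose_scale:
  fixes c \<kappa> a b :: real
  assumes "0 < c" "c < 1" "0 < \<kappa>" "0 < a" "0 < b"
  obtains X where "0 < X" "1 \<le> c * X * \<kappa>" "exp (- (c * X)) < a" "4 * exp (- ((1 - c) * X)) < b"
proof -
  define X where "X = 1 + 1 / (c * \<kappa>) + \<bar>ln a\<bar> / c + \<bar>ln (4 / b)\<bar> / (1 - c)"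
  have nonneg: "0 \<le> 1 / (c * \<kappa>)" "0 \<le> \<bar>ln a\<bar> / c" "0 \<le> \<bar>ln (4 / b)\<bar> / (1 - c)"
    using assms by auto
  have X0: "0 < X" unfolding X_def using nonneg by linarith
  have "1 / (c * \<kappa>) \<le> X" unfolding X_def using nonneg by linarith
  hence "c * \<kappa> * (1 / (c * \<kappa>)) \<le> c * \<kappa> * X" using assms by (intro mult_left_mono) auto
  hence first: "1 \<le> c * X * \<kappa>" using assms by (simp add: field_simps)
  have "\<bar>ln a\<bar> / c < X" unfolding X_def using nonneg by linarith
  hence "c * (\<bar>ln a\<bar> / c) < c * X" using assms by (intro mult_strict_left_mono) auto
  hence "- ln a < c * X" using assms by simp
  hence "exp (- (c * X)) < exp (ln a)" by simp
  hence second: "exp (- (c * X)) < a" using assms by simp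
  have "\<bar>ln (4 / b)\<bar> / (1 - c) < X" unfolding X_def using nonneg by linarith
  hence "(1 - c) * (\<bar>ln (4 / b)\<bar> / (1 - c)) < (1 - c) * X"
    using assms by (intro mult_strict_left_mono) auto
  hence "ln (4 / b) < (1 - c) * X" using assms by simp
  hence "exp (- ((1 - c) * X)) < exp (- ln (4 / b))" by simp
  also have "exp (- ln (4 / b)) = b / 4" using assms by (simp add: exp_minus)
  finally have third: "4 * exp (- ((1 - c) * X)) < b" by simp
  show ?thesis using that X0 first second third by blast
qed

text \<open>
  Then the direction sets of \<open>C\<close> cover \<open>L\<close>, so \<open>H^g_\<delta>(L) \<le> 4^\<beta> (\<Sum> d_i^s)^2\<close>.
\<close>
lemma direction_set_content_bound:
  fixes C :: "nat \<Rightarrow> 'a::real_normed_vector set" and E L :: "'a set"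
  assumes Lsph: "L \<subseteq> sphere 0 1"
    and Lseg: "\<forall>e\<in>L. \<exists>a t. 0 < t \<and> (\<forall>\<delta>. 0 < \<delta> \<and> \<delta> < \<delta>E \<longrightarrow>
                 1 < hcontent gauge_h \<delta> (closed_segment a (a + t *\<^sub>R e) \<inter> E))"
    and C: "E \<subseteq> (\<Union>i. C i)" "\<And>i. bounded (C i)" "\<And>i. diameter (C i) < exp (- X)"
    and mu: "1 < \<mu>" and c: "0 < c" "c < 1" and \<beta>: "0 < \<beta>" and s: "0 \<le> s"
    and expo: "s * (1 + \<mu>) \<le> (1 - c) * \<beta>"
    and X: "0 < X" "1 \<le> c * X * (1 - 1 / sqrt \<mu>)" "exp (- (c * X)) < \<delta>E / 2"
      "4 * exp (- ((1 - c) * X)) < \<delta>" and \<delta>: "0 < \<delta>"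
  shows "hcontent (gauge_g \<beta>) \<delta> L
    \<le> ennreal (4 powr \<beta>) * (\<Sum>i. ennreal (diameter (C i) powr s)) * (\<Sum>j. ennreal (diameter (C j) powr s))"
proof -
  define a where "a i = ennreal (diameter (C i) powr s)" for i
  have cover: "L \<subseteq> (\<Union>i j. far_directions C \<mu> c i j)"
  proof
    fix e assume eL: "e \<in> L"
    then obtain a0 t where seg: "\<forall>\<delta>'. 0 < \<delta>' \<and> \<delta>' < \<delta>E \<longrightarrow>
        1 < hcontent gauge_h \<delta>' (closed_segment a0 (a0 + t *\<^sub>R e) \<inter> E)"
      using Lseg by blast
    have "0 < \<delta>E / 2" using X(3) by (meson exp_gt_zero less_trans)
    hence "1 < hcontent gauge_h (\<delta>E / 2) (closed_segment a0 (a0 + t *\<^sub>R e) \<inter> E)"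
      using seg by simp
    moreover have "norm e = 1" using Lsph eL by auto
    ultimately have "\<exists>i j. e \<in> far_directions C \<mu> c i j"
      by (intro direction_in_far_directions[OF _ _ C mu c(1) X(1,2,3)])
    thus "e \<in> (\<Union>i j. far_directions C \<mu> c i j)" by blast
  qed
  note FD = far_directions_small[OF C(2,3) less_imp_le[OF X(1)] c \<beta> s expo \<delta> X(4)]
  have "hcontent (gauge_g \<beta>) \<delta> L \<le> (\<Sum>i. \<Sum>j. ennreal (gauge_g \<beta> (diameter (far_directions C \<mu> c i j))))"
    using FD by (intro hcontent_le_pair_cover[OF cover])
  also have "\<dots> \<le> (\<Sum>i. \<Sum>j. ennreal (4 powr \<beta>) * a i * a j)"
  proof (intro suminf_le summableI)
    fix i j
    have "ennreal (gauge_g \<beta> (diameter (far_directions C \<mu> c i j)))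
        \<le> ennreal (4 powr \<beta> * (diameter (C i) powr s * diameter (C j) powr s))"
      using FD(3) by (rule ennreal_leI)
    thus "ennreal (gauge_g \<beta> (diameter (far_directions C \<mu> c i j))) \<le> ennreal (4 powr \<beta>) * a i * a j"
      unfolding a_def by (simp add: ennreal_mult mult.assoc)
  qed
  also have "\<dots> = ennreal (4 powr \<beta>) * (\<Sum>i. a i) * (\<Sum>j. a j)" by simp
  finally show ?thesis unfolding a_def .
qed

text \<open>
  If \<open>H^s(E) = 0\<close> with \<open>s < \<beta>/2\<close>, the direction set \<open>L\<close> is \<open>H^g\<close>-null: covers of \<open>E\<close> with
  \<open>\<Sum> d_i^s < \<epsilon>\<close> make \<open>H^g_\<delta>(L) \<le> 4^\<beta> \<epsilon>^2 \<le> 4^\<beta> \<epsilon>\<close>.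
\<close>
lemma direction_set_null:
  fixes \<beta> s \<delta>E :: real and E L :: "'a::real_normed_vector set"
  assumes \<beta>: "0 < \<beta>" and s: "0 \<le> s" "s < \<beta> / 2"
    and Lsph: "L \<subseteq> sphere 0 1" and dE: "0 < \<delta>E"
    and Lseg: "\<forall>e\<in>L. \<exists>a t. 0 < t \<and> (\<forall>\<delta>. 0 < \<delta> \<and> \<delta> < \<delta>E \<longrightarrow>
                 1 < hcontent gauge_h \<delta> (closed_segment a (a + t *\<^sub>R e) \<inter> E))"
    and E0: "hmeasure (\<lambda>x. x powr s) E = 0"
  shows "hmeasure (gauge_g \<beta>) L = 0"
proof -
  obtain \<mu> c where mu: "1 < \<mu>" and c: "0 < c" "c < 1" and expo: "s * (1 + \<mu>) \<le> (1 - c) * \<beta>"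
    using exponent_choice[OF s] by blast
  have kappa: "0 < 1 - 1 / sqrt \<mu>" using mu by simp
  have small: "hcontent (gauge_g \<beta>) \<delta> L \<le> ennreal \<eta>" if \<delta>: "0 < \<delta>" and \<eta>: "0 < \<eta>" for \<delta> \<eta>
  proof -
    define \<epsilon> where "\<epsilon> = min 1 (\<eta> / 4 powr \<beta>)"
    have eps: "0 < \<epsilon>" "\<epsilon> \<le> 1" "4 powr \<beta> * \<epsilon> \<le> \<eta>"
      unfolding \<epsilon>_def using \<eta> by (auto simp: field_simps min_def)
    obtain X where X: "0 < X" "1 \<le> c * X * (1 - 1 / sqrt \<mu>)" "exp (- (c * X)) < \<delta>E / 2"
        "4 * exp (- ((1 - c) * X)) < \<delta>"
      using choose_scale[OF c kappa _ \<delta>, of "\<delta>E / 2"] dE by auto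
    obtain C where C: "E \<subseteq> (\<Union>i. C i)" "\<And>i. bounded (C i)" "\<And>i. diameter (C i) < exp (- X)"
      and Csum: "(\<Sum>i. ennreal (diameter (C i) powr s)) < ennreal \<epsilon>"
      using null_set_small_cover[OF E0 exp_gt_zero[of "- X"] eps(1)] by blast
    define S where "S = (\<Sum>i. ennreal (diameter (C i) powr s))"
    have S: "S \<le> ennreal \<epsilon>" using Csum unfolding S_def by simp
    also have "ennreal \<epsilon> \<le> 1" using eps(2) by simp
    finally have S1: "S \<le> 1" .
    have "hcontent (gauge_g \<beta>) \<delta> L \<le> ennreal (4 powr \<beta>) * S * S"
      unfolding S_def
      by (rule direction_set_content_bound[OF Lsph Lseg C mu c \<beta> s(1) expo X \<delta>])
    also have "\<dots> \<le> ennreal (4 powr \<beta>) * ennreal \<epsilon> * 1" using S S1 by (intro mult_mono) auto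
    also have "\<dots> = ennreal (4 powr \<beta> * \<epsilon>)" using eps(1) by (simp add: ennreal_mult)
    also have "\<dots> \<le> ennreal \<eta>" using eps(3) by (rule ennreal_leI)
    finally show ?thesis .
  qed
  have zero: "hcontent (gauge_g \<beta>) \<delta> L = 0" if \<delta>: "0 < \<delta>" for \<delta>
  proof -
    have "hcontent (gauge_g \<beta>) \<delta> L \<le> 0"
    proof (rule ennreal_le_epsilon)
      fix \<eta> :: real assume "0 < \<eta>"
      thus "hcontent (gauge_g \<beta>) \<delta> L \<le> 0 + ennreal \<eta>" using small[OF \<delta>] by simp
    qed
    thus ?thesis by simp
  qed
  have "hmeasure (gauge_g \<beta>) L = (SUP \<delta>\<in>{0::real<..}. (0::ennreal))"
    unfolding hmeasure_def using zero by (intro SUP_cong) auto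
  thus ?thesis by simp
qed

theorem theorem4p6:
  fixes \<beta> :: real and E :: "(real^2) set"
  assumes "0 < \<beta>" and "\<beta> \<le> 1"
    and "F_set gauge_h (gauge_g \<beta>) E"
  shows "hdim E \<ge> ereal (\<beta> / 2)"
proof -
  obtain L \<delta>E where L: "L \<subseteq> sphere 0 1" "0 < hmeasure (gauge_g \<beta>) L" "0 < \<delta>E"
    and Lseg: "\<forall>e\<in>L. \<exists>a t. 0 < t \<and> (\<forall>\<delta>. 0 < \<delta> \<and> \<delta> < \<delta>E \<longrightarrow>
                 1 < hcontent gauge_h \<delta> (closed_segment a (a + t *\<^sub>R e) \<inter> E))"
    using assms(3) unfolding F_set_def by blast
  have lower: "\<beta> / 2 \<le> s" if "0 \<le> s" "hmeasure (\<lambda>x. x powr s) E = 0" for s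
  proof (rule ccontr)
    assume "\<not> \<beta> / 2 \<le> s"
    hence "hmeasure (gauge_g \<beta>) L = 0"
      using direction_set_null[OF assms(1) that(1) _ L(1,3) Lseg that(2)] by simp
    thus False using L(2) by simp
  qed
  show ?thesis unfolding hdim_def
  proof (rule Inf_greatest)
    fix z assume "z \<in> {ereal s | s. 0 \<le> s \<and> hmeasure (\<lambda>x. x powr s) E = 0}"
    then obtain s where "z = ereal s" "0 \<le> s" "hmeasure (\<lambda>x. x powr s) E = 0" by blast
    thus "ereal (\<beta> / 2) \<le> z" using lower by simp
  qed
qed
end
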